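(* Let $a^{(1)},\dots,a^{(\ell)}\in\mathbb{F}$ be pairwise non-conjugate, let $K_i=K_{a^{(i)}}$, and for each $i$ let $\beta^{(i)}_1,\dots,\beta^{(i)}_{n_i}\in\mathbb{F}$ be right linearly independent over $K_i$; put $n=n_1+\dots+n_\ell$. For $k\in\{1,\dots,n\}$ let $\mathcal{C}_{L,k}\subseteq\mathbb{F}^n$ be the linearized Reed-Solomon code consisting of all vectors $(\mathbf{c}^{(1)},\dots,\mathbf{c}^{(\ell)})$, $\mathbf{c}^{(i)}\in\mathbb{F}^{n_i}$, with $c^{(i)}_j=\sum_{l=0}^{k-1}F_l\,\mathcal{D}^l_{a^{(i)}}(\beta^{(i)}_j)$ for some $F_0,\dots,F_{k-1}\in\mathbb{F}$. Then $\mathcal{C}_{L,k}$ is a $k$-dimensional left linear code with $\mathrm{d_{SR}}(\mathcal{C}_{L,k})=n-k+1$, where $\mathrm{d_{SR}}$ is the sum-rank distance with lengths $(n_1,\dots,n_\ell)$ and division subrings $(K_1,\dots,K_\ell)$; i.e. it is a maximum sum-rank distance code.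
   Context: $\mathbb{F}$ is a division ring, $\sigma$ a ring endomorphism of $\mathbb{F}$, $\delta$ a $\sigma$-derivation ($\delta$ additive, $\delta(ab)=\sigma(a)\delta(b)+\delta(a)b$). For $a\in\mathbb{F}$, $\mathcal{D}_a(b)=\sigma(b)a+\delta(b)$, $\mathcal{D}_a^l$ is its $l$-fold composition ($\mathcal{D}_a^0=\mathrm{Id}$), $K_a=\{b\in\mathbb{F}:\mathcal{D}_a(b)=ab\}$ (a division subring), and $a,c$ are conjugate if $c=\mathcal{D}_a(b)b^{-1}$ for some $b\in\mathbb{F}^*$. Sum-rank weight: $\mathrm{wt_{SR}}(\mathbf{c})=\sum_i\dim_{K_i}\langle c^{(i)}_1,\dots,c^{(i)}_{n_i}\rangle^R_{K_i}$ (right $K_i$-spans), $\mathrm{d_{SR}}(\mathbf{c},\mathbf{d})=\mathrm{wt_{SR}}(\mathbf{c}-\mathbf{d})$, and $\mathrm{d_{SR}}(\mathcal{C})$ is the minimum over distinct codewords. *)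

theory Defs
  imports Main
begin

text \<open>Vectors of F^n with block structure (n_1,...,n_l) are functions c :: nat => nat => 'a,
  c i j being the j-th entry of block i (i < l, j < n_i), and 0 outside this index range.\<close>

definition ring_endo :: "('a::division_ring \<Rightarrow> 'a) \<Rightarrow> bool" where
  "ring_endo \<sigma> \<longleftrightarrow> \<sigma> 1 = 1 \<and> (\<forall>x y. \<sigma> (x + y) = \<sigma> x + \<sigma> y) \<and> (\<forall>x y. \<sigma> (x * y) = \<sigma> x * \<sigma> y)"

definition sigma_derivation :: "('a::division_ring \<Rightarrow> 'a) \<Rightarrow> ('a \<Rightarrow> 'a) \<Rightarrow> bool" where
  "sigma_derivation \<sigma> \<delta> \<longleftrightarrow> (\<forall>x y. \<delta> (x + y) = \<delta> x + \<delta> y) \<and>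
     (\<forall>x y. \<delta> (x * y) = \<sigma> x * \<delta> y + \<delta> x * y)"

definition Dop :: "('a::division_ring \<Rightarrow> 'a) \<Rightarrow> ('a \<Rightarrow> 'a) \<Rightarrow> 'a \<Rightarrow> 'a \<Rightarrow> 'a" where
  "Dop \<sigma> \<delta> a b = \<sigma> b * a + \<delta> b"

definition Kset :: "('a::division_ring \<Rightarrow> 'a) \<Rightarrow> ('a \<Rightarrow> 'a) \<Rightarrow> 'a \<Rightarrow> 'a set" where
  "Kset \<sigma> \<delta> a = {b. Dop \<sigma> \<delta> a b = a * b}"

definition conjugate :: "('a::division_ring \<Rightarrow> 'a) \<Rightarrow> ('a \<Rightarrow> 'a) \<Rightarrow> 'a \<Rightarrow> 'a \<Rightarrow> bool" where
  "conjugate \<sigma> \<delta> a c \<longleftrightarrow> (\<exists>b. b \<noteq> 0 \<and> c = Dop \<sigma> \<delta> a b * inverse b)"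

definition rindep :: "'a::division_ring set \<Rightarrow> (nat \<Rightarrow> 'a) \<Rightarrow> nat \<Rightarrow> bool" where
  "rindep K v m \<longleftrightarrow> (\<forall>x. (\<forall>j<m. x j \<in> K) \<longrightarrow> (\<Sum>j<m. v j * x j) = 0 \<longrightarrow> (\<forall>j<m. x j = 0))"

definition rspan :: "'a::division_ring set \<Rightarrow> (nat \<Rightarrow> 'a) \<Rightarrow> nat \<Rightarrow> 'a set" where
  "rspan K v m = {(\<Sum>j<m. v j * x j) | x. \<forall>j<m. x j \<in> K}"

definition rdim :: "'a::division_ring set \<Rightarrow> 'a set \<Rightarrow> nat" where
  "rdim K V = Max {m. \<exists>v. (\<forall>j<m. v j \<in> V) \<and> rindep K v m}"

definition in_space :: "nat \<Rightarrow> (nat \<Rightarrow> nat) \<Rightarrow> (nat \<Rightarrow> nat \<Rightarrow> 'a::zero) \<Rightarrow> bool" where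
  "in_space l nn c \<longleftrightarrow> (\<forall>i j. \<not> (i < l \<and> j < nn i) \<longrightarrow> c i j = 0)"

definition wtSR :: "nat \<Rightarrow> (nat \<Rightarrow> nat) \<Rightarrow> (nat \<Rightarrow> 'a::division_ring set) \<Rightarrow> (nat \<Rightarrow> nat \<Rightarrow> 'a) \<Rightarrow> nat" where
  "wtSR l nn K c = (\<Sum>i<l. rdim (K i) (rspan (K i) (c i) (nn i)))"

definition dSR :: "nat \<Rightarrow> (nat \<Rightarrow> nat) \<Rightarrow> (nat \<Rightarrow> 'a::division_ring set) \<Rightarrow> (nat \<Rightarrow> nat \<Rightarrow> 'a) \<Rightarrow> (nat \<Rightarrow> nat \<Rightarrow> 'a) \<Rightarrow> nat" where
  "dSR l nn K c d = wtSR l nn K (\<lambda>i j. c i j - d i j)"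

definition dSR_code :: "nat \<Rightarrow> (nat \<Rightarrow> nat) \<Rightarrow> (nat \<Rightarrow> 'a::division_ring set) \<Rightarrow> (nat \<Rightarrow> nat \<Rightarrow> 'a) set \<Rightarrow> nat" where
  "dSR_code l nn K C = Inf {dSR l nn K c d | c d. c \<in> C \<and> d \<in> C \<and> c \<noteq> d}"

definition left_linear_code :: "nat \<Rightarrow> (nat \<Rightarrow> nat) \<Rightarrow> (nat \<Rightarrow> nat \<Rightarrow> 'a::division_ring) set \<Rightarrow> bool" where
  "left_linear_code l nn C \<longleftrightarrow> (\<forall>c\<in>C. in_space l nn c) \<and> (\<lambda>i j. 0) \<in> C \<and>
     (\<forall>c\<in>C. \<forall>d\<in>C. (\<lambda>i j. c i j + d i j) \<in> C) \<and>
     (\<forall>x. \<forall>c\<in>C. (\<lambda>i j. x * c i j) \<in> C)"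

definition lindep_vec :: "(nat \<Rightarrow> nat \<Rightarrow> nat \<Rightarrow> 'a::division_ring) \<Rightarrow> nat \<Rightarrow> bool" where
  "lindep_vec v m \<longleftrightarrow> (\<forall>x. (\<lambda>i j. \<Sum>t<m. x t * v t i j) = (\<lambda>i j. 0) \<longrightarrow> (\<forall>t<m. x t = 0))"

definition ldim :: "(nat \<Rightarrow> nat \<Rightarrow> 'a::division_ring) set \<Rightarrow> nat" where
  "ldim C = Max {m. \<exists>v. (\<forall>t<m. v t \<in> C) \<and> lindep_vec v m}"

definition LRS_code :: "('a::division_ring \<Rightarrow> 'a) \<Rightarrow> ('a \<Rightarrow> 'a) \<Rightarrow> nat \<Rightarrow> (nat \<Rightarrow> nat) \<Rightarrow>
    (nat \<Rightarrow> 'a) \<Rightarrow> (nat \<Rightarrow> nat \<Rightarrow> 'a) \<Rightarrow> nat \<Rightarrow> (nat \<Rightarrow> nat \<Rightarrow> 'a) set" where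
  "LRS_code \<sigma> \<delta> l nn a \<beta> k =
     {(\<lambda>i j. if i < l \<and> j < nn i then (\<Sum>t<k. F t * (Dop \<sigma> \<delta> (a i) ^^ t) (\<beta> i j)) else 0) | F. True}"

end

theory Submission
  imports Defs
begin

text \<open>
  A message \<open>F\<close> acts through \<open>D\<^sub>a\<close> as the right \<open>K\<^sub>a\<close>-linear map
  \<open>x \<mapsto> \<Sum>t<k. F t * (D\<^sub>a ^^ t) x\<close>, and block \<open>i\<close> of its codeword spans the image of the
  right span of \<open>\<beta> i\<close> under this map for \<open>a = a i\<close>. By rank-nullity, \<open>n\<close> minus the
  weight of the codeword is at most the total dimension of the kernels of these maps on
  those spans, and this total is smaller than the number of coefficients of \<open>F\<close>: for a
  kernel element \<open>\<gamma> \<noteq> 0\<close> in block \<open>i\<close>, divide \<open>F = Q (D - b) + r\<close> on the right, where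
  \<open>b\<close> is the conjugate of \<open>a i\<close> by \<open>\<gamma>\<close>. Then \<open>r = 0\<close>, and \<open>D - b\<close> maps the kernels of
  \<open>F\<close> into those of \<open>Q\<close>, injectively on the blocks whose \<open>a j\<close> is not conjugate to
  \<open>b\<close>, and with kernel \<open>\<gamma> K\<^sub>a\<^sub>i\<close> on block \<open>i\<close>. Hence nonzero codewords have weight at
  least \<open>n - k + 1\<close>, which in particular makes encoding injective. Conversely, Gaussian
  elimination gives a nonzero message vanishing on \<open>k - 1\<close> of the points \<open>\<beta> i j\<close>, taken
  from the ends of the blocks, and its codeword attains the bound.
\<close>

lemma sum_fun_upd_add:
  fixes f :: "'b \<Rightarrow> 'c::comm_monoid_add"
  assumes "finite A" "i \<in> A"
  shows "sum (f(i := x)) A + f i = sum f A + x"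
  using assms by (simp add: sum.remove add_ac)

lemma exists_bounded_summands:
  fixes nn :: "nat \<Rightarrow> nat"
  shows "N \<le> (\<Sum>i<l. nn i) \<Longrightarrow> \<exists>s. (\<forall>i. s i \<le> nn i) \<and> (\<Sum>i<l. s i) = N"
proof (induction l arbitrary: N)
  case 0
  then show ?case by (intro exI[of _ "\<lambda>_. 0"]) simp
next
  case (Suc l)
  define N' where "N' = min N (\<Sum>i<l. nn i)"
  obtain s where s: "\<forall>i. s i \<le> nn i" "(\<Sum>i<l. s i) = N'"
    using Suc.IH[of N'] by (auto simp: N'_def)
  have "N - N' \<le> nn l" using Suc.prems by (auto simp: N'_def)
  then show ?case
    using s by (intro exI[of _ "s(l := N - N')"]) (auto simp: N'_def)
qed

lemma exists_last_nonzero: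
  fixes F :: "nat \<Rightarrow> 'a::zero"
  assumes "\<exists>t<k. F t \<noteq> 0"
  shows "\<exists>m. 0 < m \<and> m \<le> k \<and> F (m - 1) \<noteq> 0 \<and> (\<forall>t. m \<le> t \<longrightarrow> t < k \<longrightarrow> F t = 0)"
proof -
  define d where "d = (GREATEST t. t < k \<and> F t \<noteq> 0)"
  have d: "d < k \<and> F d \<noteq> 0"
    unfolding d_def using assms by (rule GreatestI_ex_nat[where b = k]) auto
  have "t \<le> d" if "t < k" "F t \<noteq> 0" for t
    unfolding d_def using that by (intro Greatest_le_nat[of _ t k]) auto
  then show ?thesis using d by (intro exI[of _ "Suc d"]) force
qed

section \<open>Linear algebra over a division subring\<close>

lemma exists_nonzero_left_solution:
  fixes A :: "'b \<Rightarrow> 'c \<Rightarrow> 'a::division_ring"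
  assumes "finite E" "finite U" "card E < card U"
  shows "\<exists>z. (\<exists>t\<in>U. z t \<noteq> 0) \<and> (\<forall>e\<in>E. (\<Sum>t\<in>U. z t * A t e) = 0)"
  using assms
proof (induction E arbitrary: U A rule: finite_induct)
  case empty
  then obtain t where "t \<in> U" by fastforce
  then show ?case by (intro exI[of _ "\<lambda>_. 1"]) auto
next
  case (insert e E)
  show ?case
  proof (cases "\<forall>t\<in>U. A t e = 0")
    case True
    have "card E < card U" using insert by simp
    then have "\<exists>z. (\<exists>t\<in>U. z t \<noteq> 0) \<and> (\<forall>e\<in>E. (\<Sum>t\<in>U. z t * A t e) = 0)"
      using insert.prems by (intro insert.IH) auto
    with True show ?thesis by auto
  next
    case False
    then obtain t0 where t0: "t0 \<in> U" "A t0 e \<noteq> 0" by auto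
    define c where "c = A t0 e"
    define U' where "U' = U - {t0}"
    define A' where "A' t e' = A t e' - A t e * inverse c * A t0 e'" for t e'
    have "finite U'" "card E < card U'" using insert t0 by (simp_all add: U'_def)
    then obtain y where y: "\<exists>t\<in>U'. y t \<noteq> 0" "\<forall>e'\<in>E. (\<Sum>t\<in>U'. y t * A' t e') = 0"
      using insert.IH[of U' A'] by auto
    define S where "S e' = (\<Sum>t\<in>U'. y t * A t e')" for e'
    define z where "z t = (if t = t0 then - (S e * inverse c) else y t)" for t
    have split: "(\<Sum>t\<in>U. z t * A t e') = z t0 * A t0 e' + S e'" for e'
    proof -
      have "(\<Sum>t\<in>U. z t * A t e') = z t0 * A t0 e' + (\<Sum>t\<in>U'. z t * A t e')"
        using t0 insert.prems(1) by (simp add: U'_def sum.remove)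
      then show ?thesis unfolding S_def by (simp add: z_def U'_def)
    qed
    have "(\<Sum>t\<in>U'. y t * A' t e') = S e' - S e * inverse c * A t0 e'" for e'
      unfolding A'_def S_def by (simp add: algebra_simps sum_subtractf sum_distrib_right mult.assoc)
    then have "\<forall>e'\<in>insert e E. (\<Sum>t\<in>U. z t * A t e') = 0"
      using y(2) t0 unfolding split by (simp add: z_def c_def mult.assoc)
    moreover have "\<exists>t\<in>U. z t \<noteq> 0" using y(1) by (auto simp: z_def U'_def)
    ultimately show ?thesis by blast
  qed
qed

lemma rspan_cong: "(\<And>j. j < n \<Longrightarrow> v j = w j) \<Longrightarrow> rspan K v n = rspan K w n"
  unfolding rspan_def by (metis (no_types, lifting) lessThan_iff sum.cong)

lemma rspan_trailing_zeros:
  assumes "m \<le> n" "\<forall>j. m \<le> j \<longrightarrow> j < n \<longrightarrow> v j = 0"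
  shows "rspan K v n \<subseteq> rspan K v m"
proof
  fix w assume "w \<in> rspan K v n"
  then obtain x where x: "\<forall>j<n. x j \<in> K" "w = (\<Sum>j<n. v j * x j)" unfolding rspan_def by auto
  have "w = (\<Sum>j<m. v j * x j)" unfolding x(2) using assms by (intro sum.mono_neutral_right) auto
  then show "w \<in> rspan K v m" using x(1) assms(1) unfolding rspan_def by auto
qed

locale division_subring =
  fixes K :: "'a::division_ring set"
  assumes zero_mem: "0 \<in> K" and one_mem: "1 \<in> K"
    and add_mem: "x \<in> K \<Longrightarrow> y \<in> K \<Longrightarrow> x + y \<in> K"
    and mult_mem: "x \<in> K \<Longrightarrow> y \<in> K \<Longrightarrow> x * y \<in> K"
    and uminus_mem: "x \<in> K \<Longrightarrow> - x \<in> K"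
    and inverse_mem: "x \<in> K \<Longrightarrow> inverse x \<in> K"
begin

lemma diff_mem: "x \<in> K \<Longrightarrow> y \<in> K \<Longrightarrow> x - y \<in> K"
  unfolding diff_conv_add_uminus by (intro add_mem uminus_mem)

lemma sum_mem: "(\<And>x. x \<in> A \<Longrightarrow> f x \<in> K) \<Longrightarrow> sum f A \<in> K"
  by (induction A rule: infinite_finite_induct) (simp_all add: zero_mem add_mem)

lemma exists_nonzero_right_solution:
  assumes "finite E" "finite U" "card E < card U" "\<And>t e. t \<in> U \<Longrightarrow> e \<in> E \<Longrightarrow> A t e \<in> K"
  shows "\<exists>z. (\<forall>t\<in>U. z t \<in> K) \<and> (\<exists>t\<in>U. z t \<noteq> 0) \<and> (\<forall>e\<in>E. (\<Sum>t\<in>U. A t e * z t) = 0)"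
  using assms
proof (induction E arbitrary: U A rule: finite_induct)
  case empty
  then obtain t where "t \<in> U" by fastforce
  then show ?case using one_mem by (intro exI[of _ "\<lambda>_. 1"]) auto
next
  case (insert e E)
  show ?case
  proof (cases "\<forall>t\<in>U. A t e = 0")
    case True
    have "card E < card U" using insert by simp
    then have "\<exists>z. (\<forall>t\<in>U. z t \<in> K) \<and> (\<exists>t\<in>U. z t \<noteq> 0) \<and> (\<forall>e\<in>E. (\<Sum>t\<in>U. A t e * z t) = 0)"
      using insert.prems by (intro insert.IH) auto
    with True show ?thesis by auto
  next
    case False
    then obtain t0 where t0: "t0 \<in> U" "A t0 e \<noteq> 0" by auto
    define c where "c = A t0 e"
    define U' where "U' = U - {t0}"
    define A' where "A' t e' = A t e' - A t0 e' * inverse c * A t e" for t e'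
    have "c \<in> K" using insert.prems(3) t0 by (simp add: c_def)
    then have "\<forall>t\<in>U'. \<forall>e'\<in>E. A' t e' \<in> K"
      using insert.prems(3) t0 by (auto simp: A'_def U'_def intro!: diff_mem mult_mem inverse_mem)
    moreover have "finite U'" "card E < card U'" using insert t0 by (simp_all add: U'_def)
    ultimately obtain y where y: "\<forall>t\<in>U'. y t \<in> K" "\<exists>t\<in>U'. y t \<noteq> 0"
      "\<forall>e'\<in>E. (\<Sum>t\<in>U'. A' t e' * y t) = 0"
      using insert.IH[of U' A'] by auto
    define S where "S e' = (\<Sum>t\<in>U'. A t e' * y t)" for e'
    define z where "z t = (if t = t0 then - (inverse c * S e) else y t)" for t
    have "S e \<in> K"
      unfolding S_def using y(1) insert.prems(3) by (intro sum_mem mult_mem) (auto simp: U'_def)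
    then have zK: "\<forall>t\<in>U. z t \<in> K" using y(1) \<open>c \<in> K\<close>
      by (auto simp: z_def U'_def intro: uminus_mem mult_mem inverse_mem)
    have split: "(\<Sum>t\<in>U. A t e' * z t) = A t0 e' * z t0 + S e'" for e'
    proof -
      have "(\<Sum>t\<in>U. A t e' * z t) = A t0 e' * z t0 + (\<Sum>t\<in>U'. A t e' * z t)"
        using t0 insert.prems(1) by (simp add: U'_def sum.remove)
      then show ?thesis unfolding S_def by (simp add: z_def U'_def)
    qed
    have "(\<Sum>t\<in>U'. A' t e' * y t) = S e' - A t0 e' * inverse c * S e" for e'
      unfolding A'_def S_def by (simp add: algebra_simps sum_subtractf sum_distrib_left mult.assoc)
    then have "\<forall>e'\<in>insert e E. (\<Sum>t\<in>U. A t e' * z t) = 0"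
      using y(3) t0 unfolding split by (simp add: z_def c_def mult.assoc[symmetric])
    moreover have "\<exists>t\<in>U. z t \<noteq> 0" using y(2) by (auto simp: z_def U'_def)
    ultimately show ?thesis using zK by blast
  qed
qed

lemma rspan_zero: "0 \<in> rspan K v n"
  unfolding rspan_def using zero_mem by (auto intro!: exI[of _ "\<lambda>_. 0"])

lemma rspan_add: "x \<in> rspan K v n \<Longrightarrow> y \<in> rspan K v n \<Longrightarrow> x + y \<in> rspan K v n"
  unfolding rspan_def
  by (force intro!: add_mem simp: distrib_left sum.distrib[symmetric])

lemma rspan_mult_right: "x \<in> rspan K v n \<Longrightarrow> c \<in> K \<Longrightarrow> x * c \<in> rspan K v n"
  unfolding rspan_def
  by (force intro!: mult_mem simp: sum_distrib_right mult.assoc)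

lemma rspan_sum:
  "(\<forall>s<(q::nat). u s \<in> rspan K v n) \<Longrightarrow> (\<forall>s<q. c s \<in> K) \<Longrightarrow> (\<Sum>s<q. u s * c s) \<in> rspan K v n"
  by (induction q) (auto intro!: rspan_add rspan_mult_right rspan_zero)

lemma rspan_subset: "(\<forall>s<(q::nat). u s \<in> rspan K v n) \<Longrightarrow> rspan K u q \<subseteq> rspan K v n"
  by (auto simp: rspan_def[of K u] intro!: rspan_sum)

lemma rspan_generator: "j < n \<Longrightarrow> v j \<in> rspan K v n"
  unfolding rspan_def using zero_mem one_mem
  by (auto intro!: exI[of _ "\<lambda>i. if i = j then 1 else 0"]
      simp: if_distrib[of "\<lambda>x. _ * x"] cong: if_cong)

lemma rspan_mono: "n \<le> n' \<Longrightarrow> rspan K v n \<subseteq> rspan K v n'"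
  by (intro rspan_subset) (auto intro: rspan_generator)

lemma rindep_Suc_iff: "rindep K v (Suc n) \<longleftrightarrow> rindep K v n \<and> v n \<notin> rspan K v n"
proof safe
  assume ind: "rindep K v (Suc n)"
  show "rindep K v n"
    unfolding rindep_def
  proof (intro allI impI)
    fix x j assume "\<forall>j<n. x j \<in> K" "(\<Sum>j<n. v j * x j) = 0" "j < n"
    then show "x j = 0"
      using ind zero_mem unfolding rindep_def
      by (elim allE[of _ "x(n := 0)"]) (auto simp: less_Suc_eq)
  qed
  assume "v n \<in> rspan K v n"
  then obtain y where y: "\<forall>j<n. y j \<in> K" "v n = (\<Sum>j<n. v j * y j)"
    unfolding rspan_def by auto
  define x where "x j = (if j = n then - 1 else y j)" for j
  have "(\<Sum>j<Suc n. v j * x j) = 0"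
    using y(2) by (simp add: x_def)
  moreover have "\<forall>j<Suc n. x j \<in> K"
    using y(1) one_mem uminus_mem by (auto simp: x_def less_Suc_eq)
  ultimately have "x n = 0"
    using ind[unfolded rindep_def, rule_format, of x n] by simp
  then show False by (simp add: x_def)
next
  assume ind: "rindep K v n" and out: "v n \<notin> rspan K v n"
  show "rindep K v (Suc n)"
    unfolding rindep_def
  proof (intro allI impI)
    fix x j assume xK: "\<forall>j<Suc n. x j \<in> K" and eq: "(\<Sum>j<Suc n. v j * x j) = 0" and "j < Suc n"
    have "x n = 0"
    proof (rule ccontr)
      assume "x n \<noteq> 0"
      then have "v n = v n * x n * inverse (x n)" by (simp add: mult.assoc)
      also have "v n * x n = - (\<Sum>j<n. v j * x j)"
        using eq by (simp add: eq_neg_iff_add_eq_0 add.commute)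
      finally have "v n = (\<Sum>j<n. v j * x j) * - inverse (x n)" by simp
      also have "\<dots> \<in> rspan K v n"
        using xK by (intro rspan_mult_right uminus_mem inverse_mem) (auto simp: rspan_def)
      finally show False using out by simp
    qed
    then show "x j = 0"
      using ind xK eq \<open>j < Suc n\<close> unfolding rindep_def by (auto simp: less_Suc_eq)
  qed
qed

lemma rindep_nonzero:
  assumes "rindep K v n" "j < n"
  shows "v j \<noteq> 0"
proof
  assume "v j = 0"
  define x :: "nat \<Rightarrow> 'a" where "x i = (if i = j then 1 else 0)" for i
  have "(\<Sum>i<n. v i * x i) = 0"
    using assms(2) \<open>v j = 0\<close> by (simp add: x_def if_distrib[of "\<lambda>y. _ * y"] cong: if_cong)
  moreover have "\<forall>i<n. x i \<in> K" using one_mem zero_mem by (simp add: x_def)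
  ultimately have "x j = 0" using assms(1)[unfolded rindep_def, rule_format, of x j] assms(2) by simp
  then show False by (simp add: x_def)
qed

lemma rindep_extend:
  assumes "rindep K v n" "x \<notin> rspan K v n"
  shows "rindep K (v(n := x)) (Suc n)"
proof -
  have "rspan K (v(n := x)) n = rspan K v n" "rindep K (v(n := x)) n = rindep K v n"
    by (auto simp: rspan_def rindep_def)
  then show ?thesis using assms by (simp add: rindep_Suc_iff)
qed

lemma rindep_rspan_le:
  assumes "\<forall>s<q. u s \<in> rspan K v n" "rindep K u q"
  shows "q \<le> n"
proof (rule ccontr)
  assume "\<not> q \<le> n"
  then have card: "card {..<n} < card {..<q}" by simp
  have "\<forall>s<q. \<exists>y. (\<forall>j<n. y j \<in> K) \<and> u s = (\<Sum>j<n. v j * y j)"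
    using assms(1) unfolding rspan_def by blast
  then obtain Y where Y: "\<forall>s<q. (\<forall>j<n. Y s j \<in> K) \<and> u s = (\<Sum>j<n. v j * Y s j)"
    by metis
  obtain z where z: "\<forall>s<q. z s \<in> K" "\<exists>s<q. z s \<noteq> 0" "\<forall>j<n. (\<Sum>s<q. Y s j * z s) = 0"
    using exists_nonzero_right_solution[OF _ _ card, of Y] Y by (auto simp: Ball_def)
  have "(\<Sum>s<q. u s * z s) = (\<Sum>s<q. \<Sum>j<n. v j * Y s j * z s)"
    using Y by (simp add: sum_distrib_right)
  also have "\<dots> = (\<Sum>j<n. v j * (\<Sum>s<q. Y s j * z s))"
    by (subst sum.swap) (simp add: sum_distrib_left mult.assoc)
  also have "\<dots> = 0" using z(3) by simp
  finally show False using assms(2) z(1,2) unfolding rindep_def by blast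
qed

lemma rdim_le:
  assumes "V \<subseteq> rspan K v n"
  shows "rdim K V \<le> n"
  unfolding rdim_def
proof (rule Max.boundedI)
  show "finite {m. \<exists>u. (\<forall>j<m. u j \<in> V) \<and> rindep K u m}"
    using assms rindep_rspan_le by (intro finite_nat_set_iff_bounded_le[THEN iffD2]) blast
  show "{m. \<exists>u. (\<forall>j<m. u j \<in> V) \<and> rindep K u m} \<noteq> {}"
    by (auto simp: rindep_def)
qed (use assms rindep_rspan_le in blast)

lemma rindep_le_rdim:
  assumes "V \<subseteq> rspan K v n" "\<forall>s<q. u s \<in> V" "rindep K u q"
  shows "q \<le> rdim K V"
  unfolding rdim_def
proof (rule Max_ge)
  show "finite {m. \<exists>u. (\<forall>j<m. u j \<in> V) \<and> rindep K u m}"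
    using assms(1) rindep_rspan_le by (intro finite_nat_set_iff_bounded_le[THEN iffD2]) blast
qed (use assms in blast)

lemma rspan_right_linear_image:
  assumes h_add: "\<And>x y. h (x + y) = h x + h y"
    and h_mult: "\<And>x c. c \<in> K \<Longrightarrow> h (x * c) = h x * c"
  shows "h ` rspan K v n = rspan K (\<lambda>j. h (v j)) n"
proof -
  have "h 0 = 0" using h_add[of 0 0] by simp
  then have lin: "h (\<Sum>j<m. v j * x j) = (\<Sum>j<m. h (v j) * x j)" if "\<forall>j<m. x j \<in> K" for m x
    using that by (induction m) (simp_all add: h_add h_mult)
  show ?thesis
  proof
    show "h ` rspan K v n \<subseteq> rspan K (\<lambda>j. h (v j)) n"
      unfolding rspan_def using lin by blast
    show "rspan K (\<lambda>j. h (v j)) n \<subseteq> h ` rspan K v n"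
      unfolding rspan_def using lin by (auto intro!: image_eqI)
  qed
qed

lemma exists_kernel_and_image_families:
  assumes h_add: "\<And>x y. h (x + y) = h x + h y"
    and h_mult: "\<And>x c. c \<in> K \<Longrightarrow> h (x * c) = h x * c"
    and "rindep K \<beta> n"
  shows "\<exists>p \<gamma> u. p \<le> n \<and> (\<forall>s<p. \<gamma> s \<in> rspan K \<beta> n \<and> h (\<gamma> s) = 0) \<and> rindep K \<gamma> p \<and>
    (\<forall>s<n - p. u s \<in> rspan K (\<lambda>j. h (\<beta> j)) n) \<and> rindep K u (n - p)"
  using \<open>rindep K \<beta> n\<close>
proof (induction n)
  case 0
  show ?case by (intro exI[of _ 0]) (simp add: rindep_def)
next
  case (Suc n)
  have ind: "rindep K \<beta> n" and new: "\<beta> n \<notin> rspan K \<beta> n"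
    using Suc.prems by (simp_all add: rindep_Suc_iff)
  then obtain p \<gamma> u where p: "p \<le> n" and \<gamma>: "\<forall>s<p. \<gamma> s \<in> rspan K \<beta> n \<and> h (\<gamma> s) = 0"
    "rindep K \<gamma> p" and u: "\<forall>s<n - p. u s \<in> rspan K (\<lambda>j. h (\<beta> j)) n" "rindep K u (n - p)"
    using Suc.IH by blast
  have \<beta>_span: "rspan K \<beta> n \<subseteq> rspan K \<beta> (Suc n)" and h\<beta>_span:
    "rspan K (\<lambda>j. h (\<beta> j)) n \<subseteq> rspan K (\<lambda>j. h (\<beta> j)) (Suc n)"
    by (simp_all add: rspan_mono)
  show ?case
  proof (cases "h (\<beta> n) \<in> rspan K (\<lambda>j. h (\<beta> j)) n")
    case True
    \<comment> \<open>\<open>\<beta> n\<close> minus a preimage of \<open>h (\<beta> n)\<close> in \<open>rspan K \<beta> n\<close> is a new kernel element\<close>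
    then have "h (\<beta> n) \<in> h ` rspan K \<beta> n" by (simp add: rspan_right_linear_image[OF h_add h_mult])
    then obtain w where w: "w \<in> rspan K \<beta> n" "h w = h (\<beta> n)" by (metis imageE)
    define \<gamma>' where "\<gamma>' = \<gamma>(p := \<beta> n - w)"
    have "w * - 1 \<in> rspan K \<beta> (Suc n)"
      using w(1) one_mem uminus_mem \<beta>_span by (blast intro: rspan_mult_right)
    then have "\<beta> n + w * - 1 \<in> rspan K \<beta> (Suc n)" by (intro rspan_add rspan_generator) auto
    then have "\<beta> n - w \<in> rspan K \<beta> (Suc n)" by simp
    moreover have "h (\<beta> n - w) = 0" using h_add[of "\<beta> n - w" w] w(2) by simp
    moreover have "\<beta> n - w \<notin> rspan K \<gamma> p"
      using new w(1) rspan_subset[of p \<gamma> \<beta> n] \<gamma>(1) rspan_add[of "\<beta> n - w" \<beta> n w] by auto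
    ultimately have "rindep K \<gamma>' (Suc p)" "\<forall>s<Suc p. \<gamma>' s \<in> rspan K \<beta> (Suc n) \<and> h (\<gamma>' s) = 0"
      using \<gamma> \<beta>_span rindep_extend[OF \<gamma>(2)] by (auto simp: \<gamma>'_def less_Suc_eq)
    then show ?thesis
      using p u h\<beta>_span by (rule_tac exI[of _ "Suc p"], rule_tac exI[of _ \<gamma>'], rule_tac exI[of _ u]) auto
  next
    case False
    define u' where "u' = u(n - p := h (\<beta> n))"
    have "h (\<beta> n) \<notin> rspan K u (n - p)"
      using False rspan_subset[OF u(1)] by auto
    then have "rindep K u' (Suc n - p)"
      using rindep_extend[OF u(2)] p by (simp add: u'_def Suc_diff_le)
    moreover have "\<forall>s<Suc n - p. u' s \<in> rspan K (\<lambda>j. h (\<beta> j)) (Suc n)"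
      using u(1) h\<beta>_span rspan_generator[of n "Suc n" "\<lambda>j. h (\<beta> j)"] p
      by (auto simp: u'_def Suc_diff_le less_Suc_eq)
    ultimately show ?thesis
      using p \<gamma> \<beta>_span by (rule_tac exI[of _ p], rule_tac exI[of _ \<gamma>], rule_tac exI[of _ u']) auto
  qed
qed

lemma rank_nullity:
  assumes "\<And>x y. h (x + y) = h x + h y" "\<And>x c. c \<in> K \<Longrightarrow> h (x * c) = h x * c" "rindep K \<beta> n"
  shows "\<exists>p \<gamma>. p \<le> n \<and> (\<forall>s<p. h (\<gamma> s) = 0) \<and> rindep K \<gamma> p \<and>
    n - p \<le> rdim K (rspan K (\<lambda>j. h (\<beta> j)) n)"
  using exists_kernel_and_image_families[OF assms] rindep_le_rdim[OF order_refl] by meson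

end

section \<open>Skew derivations and their operators\<close>

definition skew_eval :: "('a::division_ring \<Rightarrow> 'a) \<Rightarrow> ('a \<Rightarrow> 'a) \<Rightarrow> (nat \<Rightarrow> 'a) \<Rightarrow> nat \<Rightarrow> 'a \<Rightarrow> 'a \<Rightarrow> 'a" where
  "skew_eval \<sigma> \<delta> f m a x = (\<Sum>t<m. f t * (Dop \<sigma> \<delta> a ^^ t) x)"

lemma skew_eval_truncate:
  "m \<le> k \<Longrightarrow> \<forall>t. m \<le> t \<longrightarrow> t < k \<longrightarrow> F t = 0 \<Longrightarrow> skew_eval \<sigma> \<delta> F k a x = skew_eval \<sigma> \<delta> F m a x"
  unfolding skew_eval_def by (intro sum.mono_neutral_right) auto

locale skew_derivation =
  fixes \<sigma> \<delta> :: "'a::division_ring \<Rightarrow> 'a"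
  assumes endo: "ring_endo \<sigma>" and der: "sigma_derivation \<sigma> \<delta>"
begin

abbreviation "D \<equiv> Dop \<sigma> \<delta>"

abbreviation "ev \<equiv> skew_eval \<sigma> \<delta>"

lemma sigma_add: "\<sigma> (x + y) = \<sigma> x + \<sigma> y"
  and sigma_mult: "\<sigma> (x * y) = \<sigma> x * \<sigma> y"
  and sigma_one: "\<sigma> 1 = 1"
  using endo by (simp_all add: ring_endo_def)

lemma sigma_zero: "\<sigma> 0 = 0"
  using sigma_add[of 0 0] by simp

lemma sigma_minus: "\<sigma> (- x) = - \<sigma> x"
  using sigma_add[of x "- x"] by (simp add: sigma_zero minus_unique)

lemma sigma_nonzero: "x \<noteq> 0 \<Longrightarrow> \<sigma> x \<noteq> 0"
  using sigma_mult[of x "inverse x"] sigma_one by auto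

lemma delta_add: "\<delta> (x + y) = \<delta> x + \<delta> y"
  and delta_mult: "\<delta> (x * y) = \<sigma> x * \<delta> y + \<delta> x * y"
  using der by (simp_all add: sigma_derivation_def)

lemma delta_zero: "\<delta> 0 = 0"
  using delta_add[of 0 0] by simp

lemma delta_minus: "\<delta> (- x) = - \<delta> x"
  using delta_add[of x "- x"] by (simp add: delta_zero minus_unique)

lemma delta_one: "\<delta> 1 = 0"
  using delta_mult[of 1 1] sigma_one by simp

lemma Dop_add: "D a (x + y) = D a x + D a y"
  by (simp add: Dop_def sigma_add delta_add algebra_simps)

lemma Dop_zero: "D a 0 = 0"
  by (simp add: Dop_def sigma_zero delta_zero)

lemma Dop_minus: "D a (- x) = - D a x"
  by (simp add: Dop_def sigma_minus delta_minus)

lemma Dop_diff: "D a (x - y) = D a x - D a y"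
  using Dop_add[of a x "- y"] by (simp add: Dop_minus)

lemma Dop_one: "D a 1 = a"
  by (simp add: Dop_def sigma_one delta_one)

lemma Dop_mult_left: "D a (c * x) = \<sigma> c * D a x + \<delta> c * x"
  by (simp add: Dop_def sigma_mult delta_mult algebra_simps)

lemma Dop_mult_Kset: "c \<in> Kset \<sigma> \<delta> a \<Longrightarrow> D a (x * c) = D a x * c"
  using Dop_mult_left[of a x c] by (simp add: Kset_def Dop_def algebra_simps)

lemma Dop_sum_Kset:
  "(\<And>j. j \<in> A \<Longrightarrow> c j \<in> Kset \<sigma> \<delta> a) \<Longrightarrow> D a (\<Sum>j\<in>A. x j * c j) = (\<Sum>j\<in>A. D a (x j) * c j)"
  by (induction A rule: infinite_finite_induct) (simp_all add: Dop_zero Dop_add Dop_mult_Kset)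

lemma Kset_inverse:
  assumes "c \<in> Kset \<sigma> \<delta> a"
  shows "inverse c \<in> Kset \<sigma> \<delta> a"
proof (cases "c = 0")
  case False
  have \<delta>c: "\<delta> c = a * c - \<sigma> c * a" using assms by (simp add: Kset_def Dop_def algebra_simps)
  have "a = D a (c * inverse c)" using False by (simp add: Dop_one)
  also have "\<dots> = \<sigma> c * D a (inverse c) + \<delta> c * inverse c" by (rule Dop_mult_left)
  finally have "\<sigma> c * D a (inverse c) = a - (a * c - \<sigma> c * a) * inverse c"
    using \<delta>c by (simp add: algebra_simps)
  also have "\<dots> = \<sigma> c * (a * inverse c)" using False by (simp add: algebra_simps mult.assoc)
  finally have "\<sigma> c * D a (inverse c) = \<sigma> c * (a * inverse c)" .
  then show ?thesis using sigma_nonzero[OF False] by (simp add: Kset_def)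
qed (simp add: Kset_def Dop_zero)

lemma division_subring_Kset: "division_subring (Kset \<sigma> \<delta> a)"
proof
  fix x y assume x: "x \<in> Kset \<sigma> \<delta> a"
  then show "inverse x \<in> Kset \<sigma> \<delta> a" by (rule Kset_inverse)
  show "- x \<in> Kset \<sigma> \<delta> a" using x by (simp add: Kset_def Dop_minus)
  assume y: "y \<in> Kset \<sigma> \<delta> a"
  show "x + y \<in> Kset \<sigma> \<delta> a"
    using x y by (simp add: Kset_def Dop_add distrib_left)
  show "x * y \<in> Kset \<sigma> \<delta> a"
    using x y Dop_mult_Kset[OF y, of x] by (simp add: Kset_def mult.assoc)
qed (simp_all add: Kset_def Dop_zero Dop_one)

lemma Dop_pow_add: "(D a ^^ t) (x + y) = (D a ^^ t) x + (D a ^^ t) y"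
  by (induction t) (simp_all add: Dop_add)

lemma Dop_pow_diff: "(D a ^^ t) (x - y) = (D a ^^ t) x - (D a ^^ t) y"
  by (induction t) (simp_all add: Dop_diff)

lemma Dop_pow_mult_Kset: "c \<in> Kset \<sigma> \<delta> a \<Longrightarrow> (D a ^^ t) (x * c) = (D a ^^ t) x * c"
  by (induction t) (simp_all add: Dop_mult_Kset)

lemma skew_eval_add: "ev f m a (x + y) = ev f m a x + ev f m a y"
  by (simp add: skew_eval_def Dop_pow_add distrib_left sum.distrib)

lemma skew_eval_mult_Kset: "c \<in> Kset \<sigma> \<delta> a \<Longrightarrow> ev f m a (x * c) = ev f m a x * c"
  by (simp add: skew_eval_def Dop_pow_mult_Kset sum_distrib_right mult.assoc)

lemma skew_eval_zero: "ev f m a 0 = 0"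
  using skew_eval_add[of f m a 0 0] by simp

lemma Dop_pow_mult_left:
  "\<exists>e. \<forall>a x. (D a ^^ t) (c * x) = (\<Sum>s<Suc t. e s * (D a ^^ s) x)"
proof (induction t)
  case 0
  show ?case by (intro exI[of _ "\<lambda>_. c"]) simp
next
  case (Suc t)
  then obtain e where e: "\<forall>a x. (D a ^^ t) (c * x) = (\<Sum>s<Suc t. e s * (D a ^^ s) x)" by blast
  \<comment> \<open>\<open>D (e s * y) = \<sigma> (e s) * D y + \<delta> (e s) * y\<close> raises the degree by at most one\<close>
  define e' where "e' s = (if s = 0 then 0 else \<sigma> (e (s - 1))) + (if s < Suc t then \<delta> (e s) else 0)" for s
  have "(D a ^^ Suc t) (c * x) = (\<Sum>s<Suc (Suc t). e' s * (D a ^^ s) x)" for a x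
  proof -
    have D_sum: "D a (\<Sum>s<m. y s) = (\<Sum>s<m. D a (y s))" for m :: nat and y
      by (induction m) (simp_all add: Dop_zero Dop_add)
    have "(D a ^^ Suc t) (c * x)
        = (\<Sum>s<Suc t. \<sigma> (e s) * (D a ^^ Suc s) x) + (\<Sum>s<Suc t. \<delta> (e s) * (D a ^^ s) x)"
      using e by (simp add: D_sum Dop_mult_left sum.distrib del: sum.lessThan_Suc)
    also have "(\<Sum>s<Suc t. \<sigma> (e s) * (D a ^^ Suc s) x) =
        (\<Sum>s<Suc (Suc t). (if s = 0 then 0 else \<sigma> (e (s - 1))) * (D a ^^ s) x)"
      by (subst sum.lessThan_Suc_shift) simp
    also have "(\<Sum>s<Suc t. \<delta> (e s) * (D a ^^ s) x) =
        (\<Sum>s<Suc (Suc t). (if s < Suc t then \<delta> (e s) else 0) * (D a ^^ s) x)"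
      by simp
    finally show ?thesis by (simp add: e'_def distrib_right sum.distrib)
  qed
  then show ?case by blast
qed

lemma skew_eval_division:
  "\<exists>q r. (0 < n \<longrightarrow> q (n - 1) = f n) \<and>
     (\<forall>a x. ev f (Suc n) a x = ev q n a (D a x - b * x) + r * x)"
proof (induction n arbitrary: f)
  case 0
  show ?case by (intro exI[of _ "\<lambda>_. 0"] exI[of _ "f 0"]) (simp add: skew_eval_def)
next
  case (Suc n)
  obtain e where e: "\<forall>a x. (D a ^^ n) (b * x) = (\<Sum>s<Suc n. e s * (D a ^^ s) x)"
    using Dop_pow_mult_left by blast
  define f' where "f' s = f s + f (Suc n) * e s" for s
  obtain q r where qr: "\<forall>a x. ev f' (Suc n) a x = ev q n a (D a x - b * x) + r * x"
    using Suc.IH[of f'] by blast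
  define q' where "q' = q(n := f (Suc n))"
  have "ev f (Suc (Suc n)) a x = ev q' (Suc n) a (D a x - b * x) + r * x" for a x
  proof -
    have "(D a ^^ Suc n) x = (D a ^^ n) (D a x - b * x) + (\<Sum>s<Suc n. e s * (D a ^^ s) x)"
      using e by (simp add: funpow_swap1 Dop_pow_diff)
    moreover have "ev f' (Suc n) a x = ev f (Suc n) a x + f (Suc n) * (\<Sum>s<Suc n. e s * (D a ^^ s) x)"
      by (simp add: skew_eval_def f'_def distrib_right sum.distrib sum_distrib_left mult.assoc
          del: sum.lessThan_Suc)
    moreover have "ev q' (Suc n) a y = ev q n a y + f (Suc n) * (D a ^^ n) y" for y
      by (simp add: skew_eval_def q'_def)
    ultimately show ?thesis
      using qr by (simp add: skew_eval_def distrib_left algebra_simps)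
  qed
  moreover have "q' n = f (Suc n)" by (simp add: q'_def)
  ultimately show ?case by (intro exI[of _ q'] exI[of _ r]) simp
qed

lemma Dop_mult_conjugate:
  assumes "\<gamma> \<noteq> 0"
  shows "D a (c * \<gamma>) = D (D a \<gamma> * inverse \<gamma>) c * \<gamma>"
proof -
  have "D (D a \<gamma> * inverse \<gamma>) c * \<gamma> = \<sigma> c * (D a \<gamma> * inverse \<gamma> * \<gamma>) + \<delta> c * \<gamma>"
    by (simp add: Dop_def algebra_simps)
  also have "D a \<gamma> * inverse \<gamma> * \<gamma> = D a \<gamma>" using assms by (simp add: mult.assoc)
  finally show ?thesis by (simp add: Dop_mult_left)
qed

lemma conjugate_trans:
  assumes "conjugate \<sigma> \<delta> a b" "conjugate \<sigma> \<delta> b c"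
  shows "conjugate \<sigma> \<delta> a c"
proof -
  obtain \<gamma> \<mu> where \<gamma>: "\<gamma> \<noteq> 0" "b = D a \<gamma> * inverse \<gamma>" and \<mu>: "\<mu> \<noteq> 0" "c = D b \<mu> * inverse \<mu>"
    using assms unfolding conjugate_def by blast
  have "D a (\<mu> * \<gamma>) = D b \<mu> * \<gamma>" unfolding \<gamma>(2) using \<gamma>(1) by (rule Dop_mult_conjugate)
  moreover have "\<gamma> * (inverse \<gamma> * inverse \<mu>) = inverse \<mu>"
    using \<gamma>(1) by (simp add: mult.assoc[symmetric])
  ultimately have "D a (\<mu> * \<gamma>) * inverse (\<mu> * \<gamma>) = c"
    using \<gamma>(1) \<mu> by (simp add: nonzero_inverse_mult_distrib mult.assoc)
  then show ?thesis unfolding conjugate_def using \<gamma> \<mu> by (intro exI[of _ "\<mu> * \<gamma>"]) simp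
qed

lemma conjugate_sym:
  assumes "conjugate \<sigma> \<delta> a b"
  shows "conjugate \<sigma> \<delta> b a"
proof -
  obtain \<gamma> where \<gamma>: "\<gamma> \<noteq> 0" "b = D a \<gamma> * inverse \<gamma>" using assms unfolding conjugate_def by blast
  have "a = D a (inverse \<gamma> * \<gamma>)" using \<gamma> by (simp add: Dop_one)
  also have "\<dots> = D b (inverse \<gamma>) * \<gamma>" unfolding \<gamma>(2) using \<gamma>(1) by (rule Dop_mult_conjugate)
  finally show ?thesis unfolding conjugate_def using \<gamma>(1) by (intro exI[of _ "inverse \<gamma>"]) simp
qed

lemma conjugate_if_Dop_eq_mult: "w \<noteq> 0 \<Longrightarrow> D a w = b * w \<Longrightarrow> conjugate \<sigma> \<delta> a b"
  unfolding conjugate_def by (intro exI[of _ w]) (simp add: mult.assoc)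

lemma Kset_if_Dop_eq_conjugate_mult:
  assumes "\<gamma> \<noteq> 0" "D a w = D a \<gamma> * inverse \<gamma> * w"
  shows "inverse \<gamma> * w \<in> Kset \<sigma> \<delta> a"
proof -
  define c where "c = inverse \<gamma> * w"
  have "\<gamma> * c = w" "inverse \<gamma> * (\<gamma> * c) = c"
    using assms(1) by (simp_all add: c_def mult.assoc[symmetric])
  then have "\<sigma> \<gamma> * D a c + \<delta> \<gamma> * c = D a \<gamma> * c"
    using assms(2) Dop_mult_left[of a \<gamma> c] by (simp add: mult.assoc)
  then have "\<sigma> \<gamma> * D a c = \<sigma> \<gamma> * (a * c)"
    by (simp add: Dop_def algebra_simps)
  then show ?thesis using sigma_nonzero[OF assms(1)] by (simp add: Kset_def c_def)
qed

lemma Dop_eq_mult_if_relation: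
  assumes "\<forall>j<m. x j \<in> Kset \<sigma> \<delta> a" "(\<Sum>j<m. (D a (g j) - b * g j) * x j) = 0"
  shows "D a (\<Sum>j<m. g j * x j) = b * (\<Sum>j<m. g j * x j)"
proof -
  have "D a (\<Sum>j<m. g j * x j) = (\<Sum>j<m. D a (g j) * x j)"
    using assms(1) by (intro Dop_sum_Kset) auto
  then have "D a (\<Sum>j<m. g j * x j) - b * (\<Sum>j<m. g j * x j) = (\<Sum>j<m. (D a (g j) - b * g j) * x j)"
    by (simp add: sum_distrib_left sum_subtractf algebra_simps)
  then show ?thesis using assms(2) by simp
qed

lemma rindep_Dop_minus_nonconjugate:
  assumes "\<not> conjugate \<sigma> \<delta> a b" "rindep (Kset \<sigma> \<delta> a) g m"
  shows "rindep (Kset \<sigma> \<delta> a) (\<lambda>j. D a (g j) - b * g j) m"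
  unfolding rindep_def
proof (intro allI impI)
  fix x j assume x: "\<forall>j<m. x j \<in> Kset \<sigma> \<delta> a" "(\<Sum>j<m. (D a (g j) - b * g j) * x j) = 0"
    and "j < m"
  have "(\<Sum>j<m. g j * x j) = 0"
    using assms(1) Dop_eq_mult_if_relation[OF x] conjugate_if_Dop_eq_mult by blast
  then show "x j = 0" using assms(2) x(1) \<open>j < m\<close> unfolding rindep_def by blast
qed

lemma rindep_Dop_minus_conjugate:
  assumes "rindep (Kset \<sigma> \<delta> a) g (Suc m)" "b = D a (g m) * inverse (g m)"
  shows "rindep (Kset \<sigma> \<delta> a) (\<lambda>j. D a (g j) - b * g j) m"
  unfolding rindep_def
proof (intro allI impI)
  interpret K: division_subring "Kset \<sigma> \<delta> a" by (rule division_subring_Kset)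
  fix x j assume x: "\<forall>j<m. x j \<in> Kset \<sigma> \<delta> a" "(\<Sum>j<m. (D a (g j) - b * g j) * x j) = 0"
    and "j < m"
  define w where "w = (\<Sum>j<m. g j * x j)"
  have ind: "rindep (Kset \<sigma> \<delta> a) g m" and "g m \<notin> rspan (Kset \<sigma> \<delta> a) g m"
    using assms(1) by (simp_all add: K.rindep_Suc_iff)
  then have "g m \<noteq> 0" using K.rspan_zero by auto
  \<comment> \<open>\<open>w\<close> is an eigenvector for the same eigenvalue as \<open>g m\<close>, hence a right multiple of it\<close>
  moreover have "D a w = b * w" using Dop_eq_mult_if_relation[OF x] by (simp add: w_def)
  ultimately have c: "inverse (g m) * w \<in> Kset \<sigma> \<delta> a"
    using assms(2) by (intro Kset_if_Dop_eq_conjugate_mult) auto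
  define x' where "x' = x(m := - (inverse (g m) * w))"
  have "(\<Sum>j<Suc m. g j * x' j) = w - g m * (inverse (g m) * w)"
    by (simp add: x'_def w_def)
  also have "\<dots> = 0" using \<open>g m \<noteq> 0\<close> by (simp add: mult.assoc[symmetric])
  moreover have "\<forall>j<Suc m. x' j \<in> Kset \<sigma> \<delta> a"
    using x(1) c K.uminus_mem by (auto simp: x'_def less_Suc_eq)
  ultimately have "x' j = 0"
    using assms(1)[unfolded rindep_def, rule_format, of x' j] \<open>j < m\<close> by simp
  then show "x j = 0" using \<open>j < m\<close> by (simp add: x'_def)
qed

lemma rindep_Dop_minus_blocks:
  fixes l :: nat
  assumes nc: "\<forall>i<l. \<forall>j<l. i \<noteq> j \<longrightarrow> \<not> conjugate \<sigma> \<delta> (a i) (a j)"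
    and i0: "i0 < l" "mm i0 = Suc j0"
    and ind: "\<forall>i<l. rindep (Kset \<sigma> \<delta> (a i)) (g i) (mm i)"
  defines "b \<equiv> D (a i0) (g i0 j0) * inverse (g i0 j0)"
  shows "\<forall>i<l. rindep (Kset \<sigma> \<delta> (a i)) (\<lambda>j. D (a i) (g i j) - b * g i j) ((mm(i0 := j0)) i)"
proof (intro allI impI)
  fix i assume "i < l"
  show "rindep (Kset \<sigma> \<delta> (a i)) (\<lambda>j. D (a i) (g i j) - b * g i j) ((mm(i0 := j0)) i)"
  proof (cases "i = i0")
    case True
    then show ?thesis
      using rindep_Dop_minus_conjugate[of "a i0" "g i0" j0 b] ind[rule_format, OF i0(1)] i0(2)
      by (simp add: b_def)
  next
    case False
    have "g i0 j0 \<noteq> 0"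
      using division_subring.rindep_nonzero[OF division_subring_Kset, of "a i0" "g i0" "mm i0" j0]
        ind[rule_format, OF i0(1)] i0(2)
      by simp
    then have "conjugate \<sigma> \<delta> (a i0) b" unfolding conjugate_def b_def by blast
    then have "\<not> conjugate \<sigma> \<delta> (a i) b"
      using nc \<open>i < l\<close> i0 False conjugate_trans conjugate_sym by blast
    then show ?thesis
      using rindep_Dop_minus_nonconjugate[of "a i" b "g i" "mm i"] ind \<open>i < l\<close> False by simp
  qed
qed

lemma skew_eval_root_bound:
  fixes l :: nat
  assumes nc: "\<forall>i<l. \<forall>j<l. i \<noteq> j \<longrightarrow> \<not> conjugate \<sigma> \<delta> (a i) (a j)"
  shows "0 < m \<Longrightarrow> f (m - 1) \<noteq> 0 \<Longrightarrow> \<forall>i<l. rindep (Kset \<sigma> \<delta> (a i)) (g i) (mm i) \<Longrightarrow>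
    \<forall>i<l. \<forall>j<mm i. ev f m (a i) (g i j) = 0 \<Longrightarrow> (\<Sum>i<l. mm i) < m"
proof (induction m arbitrary: f g mm)
  case 0
  then show ?case by simp
next
  case (Suc m)
  note ind = Suc.prems(3) and root = Suc.prems(4)
  show ?case
  proof (cases "(\<Sum>i<l. mm i) = 0")
    case False
    then obtain i0 where i0: "i0 < l" "0 < mm i0" by (metis lessThan_iff neq0_conv sum.neutral)
    define j0 where "j0 = mm i0 - 1"
    define \<gamma> where "\<gamma> = g i0 j0"
    have j0: "mm i0 = Suc j0" using i0 by (simp add: j0_def)
    have "\<gamma> \<noteq> 0"
      using division_subring.rindep_nonzero[OF division_subring_Kset, of "a i0" "g i0" "mm i0" j0]
        ind[rule_format, OF i0(1)] j0
      by (simp add: \<gamma>_def)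
    \<comment> \<open>divide \<open>f\<close> by \<open>D - b\<close>, where \<open>b\<close> is the conjugate of \<open>a i0\<close> annihilating \<open>\<gamma>\<close>\<close>
    define b where "b = D (a i0) \<gamma> * inverse \<gamma>"
    have b\<gamma>: "D (a i0) \<gamma> - b * \<gamma> = 0" using \<open>\<gamma> \<noteq> 0\<close> by (simp add: b_def mult.assoc)
    obtain q r where q: "0 < m \<longrightarrow> q (m - 1) = f m"
      and qr: "\<forall>a x. ev f (Suc m) a x = ev q m a (D a x - b * x) + r * x"
      using skew_eval_division[of m f b] by blast
    have "ev f (Suc m) (a i0) \<gamma> = 0" using root i0 j0 by (simp add: \<gamma>_def)
    then have "r = 0" using qr b\<gamma> \<open>\<gamma> \<noteq> 0\<close> by (simp add: skew_eval_zero)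
    have "0 < m"
      using \<open>ev f (Suc m) (a i0) \<gamma> = 0\<close> Suc.prems(2) \<open>\<gamma> \<noteq> 0\<close> by (cases m) (simp_all add: skew_eval_def)
    define g' where "g' i = (\<lambda>j. D (a i) (g i j) - b * g i j)" for i
    define mm' where "mm' = mm(i0 := j0)"
    have "\<forall>i<l. \<forall>j<mm' i. ev q m (a i) (g' i j) = 0"
      using root qr \<open>r = 0\<close> j0 by (auto simp: g'_def mm'_def split: if_splits)
    moreover have "\<forall>i<l. rindep (Kset \<sigma> \<delta> (a i)) (g' i) (mm' i)"
      using rindep_Dop_minus_blocks[OF nc i0(1) j0 ind] by (simp add: g'_def mm'_def b_def \<gamma>_def)
    ultimately have "(\<Sum>i<l. mm' i) < m"
      using Suc.IH[of q g' mm'] \<open>0 < m\<close> q Suc.prems(2) by simp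
    moreover have "(\<Sum>i<l. mm' i) + mm i0 = (\<Sum>i<l. mm i) + j0"
      using i0 unfolding mm'_def by (intro sum_fun_upd_add) auto
    ultimately show ?thesis using j0 by simp
  qed simp
qed

end

section \<open>Linearized Reed-Solomon codes\<close>

locale linearized_RS_code = skew_derivation +
  fixes l :: nat and nn :: "nat \<Rightarrow> nat" and a :: "nat \<Rightarrow> 'a" and \<beta> :: "nat \<Rightarrow> nat \<Rightarrow> 'a"
    and k n :: nat
  assumes nonconjugate: "\<forall>i<l. \<forall>j<l. i \<noteq> j \<longrightarrow> \<not> conjugate \<sigma> \<delta> (a i) (a j)"
    and \<beta>_indep: "\<forall>i<l. rindep (Kset \<sigma> \<delta> (a i)) (\<beta> i) (nn i)"
    and n_eq: "n = (\<Sum>i<l. nn i)"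
    and k_pos: "1 \<le> k" and k_le: "k \<le> n"
begin

abbreviation "K \<equiv> \<lambda>i. Kset \<sigma> \<delta> (a i)"

definition codeword :: "(nat \<Rightarrow> 'a) \<Rightarrow> nat \<Rightarrow> nat \<Rightarrow> 'a" where
  "codeword F = (\<lambda>i j. if i < l \<and> j < nn i then ev F k (a i) (\<beta> i j) else 0)"

lemma LRS_code_eq: "LRS_code \<sigma> \<delta> l nn a \<beta> k = range codeword"
  unfolding LRS_code_def codeword_def skew_eval_def by auto

lemma codeword_lincomb: "(\<lambda>i j. \<Sum>t\<in>A. x t * codeword (G t) i j) = codeword (\<lambda>s. \<Sum>t\<in>A. x t * G t s)"
proof (intro ext)
  fix i j
  show "(\<Sum>t\<in>A. x t * codeword (G t) i j) = codeword (\<lambda>s. \<Sum>t\<in>A. x t * G t s) i j"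
  proof (cases "i < l \<and> j < nn i")
    case True
    have "(\<Sum>t\<in>A. x t * (\<Sum>s<k. G t s * (D (a i) ^^ s) (\<beta> i j))) =
        (\<Sum>s<k. (\<Sum>t\<in>A. x t * G t s) * (D (a i) ^^ s) (\<beta> i j))"
      by (simp add: sum_distrib_left sum_distrib_right mult.assoc) (rule sum.swap)
    then show ?thesis using True by (simp add: codeword_def skew_eval_def)
  qed (auto simp: codeword_def)
qed

lemma codeword_diff: "(\<lambda>i j. codeword F i j - codeword G i j) = codeword (\<lambda>t. F t - G t)"
  by (intro ext) (simp add: codeword_def skew_eval_def algebra_simps sum_subtractf)

lemma codeword_add: "(\<lambda>i j. codeword F i j + codeword G i j) = codeword (\<lambda>t. F t + G t)"
  by (intro ext) (simp add: codeword_def skew_eval_def algebra_simps sum.distrib)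

lemma codeword_smult: "(\<lambda>i j. x * codeword F i j) = codeword (\<lambda>t. x * F t)"
  by (intro ext) (simp add: codeword_def skew_eval_def algebra_simps sum_distrib_left)

lemma codeword_zero: "codeword (\<lambda>_. 0) = (\<lambda>i j. 0)"
  by (intro ext) (simp add: codeword_def skew_eval_def)

lemma codeword_cong: "\<forall>t<k. F t = G t \<Longrightarrow> codeword F = codeword G"
  unfolding codeword_def skew_eval_def by (intro ext) (auto intro!: sum.cong)

lemma wtSR_codeword_ge:
  assumes "\<exists>t<k. F t \<noteq> 0"
  shows "n - k + 1 \<le> wtSR l nn K (codeword F)"
proof -
  obtain m where m: "0 < m" "m \<le> k" "F (m - 1) \<noteq> 0" and trunc: "\<forall>t. m \<le> t \<longrightarrow> t < k \<longrightarrow> F t = 0"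
    using exists_last_nonzero[OF assms] by blast
  have "\<forall>i<l. \<exists>p \<gamma>. p \<le> nn i \<and> (\<forall>s<p. ev F m (a i) (\<gamma> s) = 0) \<and> rindep (K i) \<gamma> p \<and>
      nn i - p \<le> rdim (K i) (rspan (K i) (\<lambda>j. ev F m (a i) (\<beta> i j)) (nn i))"
    using \<beta>_indep by (intro allI impI division_subring.rank_nullity[OF division_subring_Kset])
      (simp_all add: skew_eval_add skew_eval_mult_Kset)
  then obtain p \<gamma> where p: "\<forall>i<l. p i \<le> nn i" and \<gamma>: "\<forall>i<l. \<forall>s<p i. ev F m (a i) (\<gamma> i s) = 0"
      "\<forall>i<l. rindep (K i) (\<gamma> i) (p i)"
    and rank: "\<forall>i<l. nn i - p i \<le> rdim (K i) (rspan (K i) (\<lambda>j. ev F m (a i) (\<beta> i j)) (nn i))"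
    by metis
  have "(\<Sum>i<l. p i) < m"
    using skew_eval_root_bound[OF nonconjugate m(1) m(3) \<gamma>(2) \<gamma>(1)] .
  moreover have "rspan (K i) (codeword F i) (nn i) = rspan (K i) (\<lambda>j. ev F m (a i) (\<beta> i j)) (nn i)"
    if "i < l" for i
    using that skew_eval_truncate[OF m(2) trunc] by (intro rspan_cong) (simp add: codeword_def)
  then have "(\<Sum>i<l. nn i - p i) \<le> wtSR l nn K (codeword F)"
    unfolding wtSR_def using rank by (intro sum_mono) auto
  moreover have "(\<Sum>i<l. nn i - p i) = n - (\<Sum>i<l. p i)"
    using p n_eq by (subst sum_subtractf_nat) auto
  ultimately show ?thesis using m(2) k_le by linarith
qed

lemma wtSR_zero: "wtSR l nn K (\<lambda>i j. 0) = 0"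
proof -
  have "rdim (K i) (rspan (K i) (\<lambda>j. 0) (nn i)) \<le> 0" for i
    by (rule division_subring.rdim_le[OF division_subring_Kset, where v = "\<lambda>j. 0"])
      (auto simp: rspan_def)
  then show ?thesis by (simp add: wtSR_def)
qed

lemma codeword_eq_zero_imp: "codeword F = (\<lambda>i j. 0) \<Longrightarrow> \<forall>t<k. F t = 0"
  using wtSR_codeword_ge[of F] wtSR_zero k_le by force

lemma exists_codeword_wtSR_le: "\<exists>F. (\<exists>t<k. F t \<noteq> 0) \<and> wtSR l nn K (codeword F) \<le> n - k + 1"
proof -
  have "k - 1 \<le> (\<Sum>i<l. nn i)" using k_le n_eq by simp
  then obtain s where s: "\<forall>i. s i \<le> nn i" "(\<Sum>i<l. s i) = k - 1"
    using exists_bounded_summands by blast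
  \<comment> \<open>make the codeword vanish on the last \<open>s i\<close> positions of every block\<close>
  define E where "E = Sigma {..<l} (\<lambda>i. {nn i - s i..<nn i})"
  have "card E < card {..<k}" using s k_pos by (simp add: E_def)
  then obtain F where F: "\<exists>t<k. F t \<noteq> 0" "\<forall>(i, j)\<in>E. (\<Sum>t<k. F t * (D (a i) ^^ t) (\<beta> i j)) = 0"
    using exists_nonzero_left_solution[of E "{..<k}" "\<lambda>t (i, j). (D (a i) ^^ t) (\<beta> i j)"]
    by (auto simp: E_def split: prod.splits)
  have "rdim (K i) (rspan (K i) (codeword F i) (nn i)) \<le> nn i - s i" if "i < l" for i
  proof (rule division_subring.rdim_le[OF division_subring_Kset], rule rspan_trailing_zeros)
    show "\<forall>j. nn i - s i \<le> j \<longrightarrow> j < nn i \<longrightarrow> codeword F i j = 0"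
      using F(2) that by (auto simp: E_def codeword_def skew_eval_def)
  qed simp
  then have "wtSR l nn K (codeword F) \<le> (\<Sum>i<l. nn i - s i)"
    unfolding wtSR_def by (intro sum_mono) auto
  also have "\<dots> = n - (k - 1)" using s n_eq by (subst sum_subtractf_nat) auto
  finally show ?thesis using F(1) k_pos k_le by (intro exI[of _ F]) auto
qed

lemma LRS_left_linear: "left_linear_code l nn (LRS_code \<sigma> \<delta> l nn a \<beta> k)"
  unfolding left_linear_code_def LRS_code_eq
  using codeword_zero[symmetric] codeword_add codeword_smult
  by (auto simp: in_space_def codeword_def)

lemma LRS_ldim: "ldim (LRS_code \<sigma> \<delta> l nn a \<beta> k) = k"
proof -
  let ?M = "{m. \<exists>v. (\<forall>t<m. v t \<in> range codeword) \<and> lindep_vec v m}"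
  define e where "e t = codeword (\<lambda>s. if s = t then 1 else 0)" for t
  have "lindep_vec e k"
    unfolding lindep_vec_def
  proof (intro allI impI)
    fix x t assume "(\<lambda>i j. \<Sum>t<k. x t * e t i j) = (\<lambda>i j. 0)" "t < k"
    then have "codeword (\<lambda>s. \<Sum>t<k. x t * (if s = t then 1 else 0)) = (\<lambda>i j. 0)"
      unfolding e_def codeword_lincomb by simp
    then show "x t = 0"
      using codeword_eq_zero_imp \<open>t < k\<close> by (fastforce simp: if_distrib[of "\<lambda>y. _ * y"] cong: if_cong)
  qed
  then have "k \<in> ?M" by (rule_tac CollectI, rule_tac exI[of _ e]) (auto simp: e_def)
  moreover have bound: "m \<le> k" if "m \<in> ?M" for m
  proof (rule ccontr)
    assume "\<not> m \<le> k"
    then have card: "card {..<k} < card {..<m}" by simp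
    obtain v where v: "\<forall>t<m. v t \<in> range codeword" "lindep_vec v m" using \<open>m \<in> ?M\<close> by blast
    then have "\<forall>t<m. \<exists>F. v t = codeword F" by blast
    then obtain G where G: "\<forall>t<m. v t = codeword (G t)" by metis
    obtain x where x: "\<exists>t<m. x t \<noteq> 0" "\<forall>s<k. (\<Sum>t<m. x t * G t s) = 0"
      using exists_nonzero_left_solution[OF _ _ card, of G] by auto
    \<comment> \<open>more than \<open>k\<close> codewords are dependent, since their message vectors are\<close>
    have "(\<lambda>i j. \<Sum>t<m. x t * v t i j) = codeword (\<lambda>s. \<Sum>t<m. x t * G t s)"
      using G by (simp add: codeword_lincomb[symmetric])
    also have "\<dots> = (\<lambda>i j. 0)" using x(2) by (simp add: codeword_cong[of _ "\<lambda>_. 0"] codeword_zero)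
    finally show False using v(2) x(1) unfolding lindep_vec_def by blast
  qed
  moreover have "finite ?M"
  proof (rule finite_subset)
    show "?M \<subseteq> {..k}" using bound by (intro subsetI) (simp only: atMost_iff)
  qed simp
  ultimately show ?thesis unfolding ldim_def LRS_code_eq by (intro Max_eqI) auto
qed

lemma LRS_min_distance: "dSR_code l nn K (LRS_code \<sigma> \<delta> l nn a \<beta> k) = n - k + 1"
  unfolding dSR_code_def LRS_code_eq
proof (rule cInf_eq_minimum)
  obtain F where F: "\<exists>t<k. F t \<noteq> 0" "wtSR l nn K (codeword F) \<le> n - k + 1"
    using exists_codeword_wtSR_le by blast
  then have "dSR l nn K (codeword F) (codeword (\<lambda>_. 0)) = n - k + 1"
    using wtSR_codeword_ge[OF F(1)] by (simp add: dSR_def codeword_zero)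
  moreover have "codeword F \<noteq> codeword (\<lambda>_. 0)"
    using F(1) codeword_eq_zero_imp codeword_zero by metis
  ultimately show "n - k + 1 \<in> {dSR l nn K c d |c d. c \<in> range codeword \<and> d \<in> range codeword \<and> c \<noteq> d}"
    by (rule_tac CollectI, rule_tac exI[of _ "codeword F"], rule_tac exI[of _ "codeword (\<lambda>_. 0)"]) auto
next
  fix y assume "y \<in> {dSR l nn K c d |c d. c \<in> range codeword \<and> d \<in> range codeword \<and> c \<noteq> d}"
  then obtain F G where y: "y = dSR l nn K (codeword F) (codeword G)" "codeword F \<noteq> codeword G"
    by blast
  then have "\<exists>t<k. F t - G t \<noteq> 0" using codeword_cong[of F G] by auto
  then show "n - k + 1 \<le> y" unfolding y(1) dSR_def codeword_diff by (rule wtSR_codeword_ge)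
qed

end

theorem mainTheorem13:
  fixes \<sigma> \<delta> :: "'a::division_ring \<Rightarrow> 'a"
    and l :: nat and nn :: "nat \<Rightarrow> nat" and a :: "nat \<Rightarrow> 'a" and \<beta> :: "nat \<Rightarrow> nat \<Rightarrow> 'a"
    and k n :: nat
  assumes "ring_endo \<sigma>"
    and "sigma_derivation \<sigma> \<delta>"
    and "\<forall>i<l. \<forall>j<l. i \<noteq> j \<longrightarrow> \<not> conjugate \<sigma> \<delta> (a i) (a j)"
    and "\<forall>i<l. rindep (Kset \<sigma> \<delta> (a i)) (\<beta> i) (nn i)"
    and "n = (\<Sum>i<l. nn i)"
    and "1 \<le> k" and "k \<le> n"
  shows "left_linear_code l nn (LRS_code \<sigma> \<delta> l nn a \<beta> k)
    \<and> ldim (LRS_code \<sigma> \<delta> l nn a \<beta> k) = k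
    \<and> dSR_code l nn (\<lambda>i. Kset \<sigma> \<delta> (a i)) (LRS_code \<sigma> \<delta> l nn a \<beta> k) = n - k + 1"
proof -
  interpret linearized_RS_code \<sigma> \<delta> l nn a \<beta> k n
    using assms by unfold_locales auto
  show ?thesis using LRS_left_linear LRS_ldim LRS_min_distance by blast
qed

end
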